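(* Let $\mathbf{G}=\int_{\mathbb{R}}[\varphi_k(x):k\in\mathbb{Z}]\,[\varphi_k(x):k\in\mathbb{Z}]^T\,dx$, i.e. $\mathbf{G}(k,m)=\int_{\mathbb{R}}\varphi_k\varphi_m$, and assume that the entries $\mathbf{G}(k,m)$ for $k,m\notin\mathcal{I}_{irr}$ are given. Then $\mathbf{G}$ satisfies the linear system $\mathbf{G}=\frac12\mathbf{P}^T\mathbf{G}\mathbf{P}$, and the remaining entries of $\mathbf{G}$ are uniquely determined by this linear system (together with the given entries). Moreover, $\mathbf{G}_\Phi=\mathbf{D}^{-1/2}\mathbf{G}\mathbf{D}^{-1/2}$ with $\mathbf{D}=\mathrm{diag}(\mathbf{G}\mathbf{1})$, where $\mathbf{1}=[1:k\in\mathbb{Z}]$ and $\mathbf{G}_\Phi=\int_{\mathbb{R}}\Phi(x)\Phi(x)^T\,dx$.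
   Context: Fix $n\in\mathbb{N}$, $h_\ell,h_r>0$, and the mesh $\mathbf{t}(k)=kh_\ell$ for $k<0$, $\mathbf{t}(k)=kh_r$ for $k\ge0$. Let $\mathbf{P}$ be the bi-infinite matrix with $\mathbf{P}(2k,k)=1$; for each $k$, $\mathbf{P}(2k+1,j)$, $j=k-n+1,\dots,k+n$, the unique numbers with $\sum_{j=k-n+1}^{k+n}\mathbf{P}(2k+1,j)\mathbf{t}(j)^\alpha=(\mathbf{t}(2k+1)/2)^\alpha$, $\alpha=0,\dots,2n-1$; all other entries $0$ (semi-regular Dubuc–Deslauriers $2n$-point scheme). This scheme is convergent: for each $k\in\mathbb{Z}$ there is a continuous compactly supported function $\varphi_k$ (basic limit function), the uniform limit of the piecewise linear interpolants of $(2^{-j}\mathbf{t}(m),(\mathbf{P}^j\delta_k)(m))_{m\in\mathbb{Z}}$, $\delta_k$ the unit sequence at $k$. Let $\mathcal{I}_{irr}=\{2-2n,\dots,2n-2\}$. For the last statement assume $\int_{\mathbb{R}}\varphi_k>0$ for all $k$, and let $\Phi=[\phi_k:k\in\mathbb{Z}]$ with $\phi_k=\varphi_k/\sqrt{\int_{\mathbb{R}}\varphi_k}$. *)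

theory Defs
  imports "HOL-Analysis.Analysis"
begin

definition dd_mesh :: "real \<Rightarrow> real \<Rightarrow> int \<Rightarrow> real" where
  "dd_mesh hl hr k = (if k < 0 then real_of_int k * hl else real_of_int k * hr)"

definition dd_P :: "nat \<Rightarrow> real \<Rightarrow> real \<Rightarrow> int \<Rightarrow> int \<Rightarrow> real" where
  "dd_P n hl hr i j =
    (if even i then (if j = i div 2 then 1 else 0)
     else (let k = i div 2;
               c = (THE c :: int \<Rightarrow> real.
                      (\<forall>j. j \<notin> {k - int n + 1 .. k + int n} \<longrightarrow> c j = 0) \<and>
                      (\<forall>\<alpha> < 2 * n. (\<Sum>j\<in>{k - int n + 1 .. k + int n}. c j * dd_mesh hl hr j ^ \<alpha>)
                                   = (dd_mesh hl hr i / 2) ^ \<alpha>))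
           in c j))"

definition dd_subd :: "nat \<Rightarrow> real \<Rightarrow> real \<Rightarrow> (int \<Rightarrow> real) \<Rightarrow> int \<Rightarrow> real" where
  "dd_subd n hl hr c i = (\<Sum>\<^sub>\<infinity> j. dd_P n hl hr i j * c j)"

definition unit_seq :: "int \<Rightarrow> int \<Rightarrow> real" where
  "unit_seq k m = (if m = k then 1 else 0)"

text \<open>Piecewise linear interpolant of the points (X m, Y m), m in Z, for a strictly
  increasing node sequence X unbounded in both directions.\<close>
definition pl_interp :: "(int \<Rightarrow> real) \<Rightarrow> (int \<Rightarrow> real) \<Rightarrow> real \<Rightarrow> real" where
  "pl_interp X Y x =
     (let m = (GREATEST m. X m \<le> x)
      in Y m + (Y (m + 1) - Y m) * (x - X m) / (X (m + 1) - X m))"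

definition I_irr :: "nat \<Rightarrow> int set" where
  "I_irr n = {2 - 2 * int n .. 2 * int n - 2}"

definition is_basic_limit_family :: "nat \<Rightarrow> real \<Rightarrow> real \<Rightarrow> (int \<Rightarrow> real \<Rightarrow> real) \<Rightarrow> bool" where
  "is_basic_limit_family n hl hr \<phi> \<longleftrightarrow>
     (\<forall>k. continuous_on UNIV (\<phi> k) \<and> bounded {x. \<phi> k x \<noteq> 0} \<and>
          uniform_limit UNIV
            (\<lambda>j x. pl_interp (\<lambda>m. dd_mesh hl hr m / 2 ^ j) ((dd_subd n hl hr ^^ j) (unit_seq k)) x)
            (\<phi> k) sequentially)"

definition gram :: "(int \<Rightarrow> real \<Rightarrow> real) \<Rightarrow> int \<Rightarrow> int \<Rightarrow> real" where
  "gram \<phi> k m = (\<integral>x. \<phi> k x * \<phi> m x \<partial>lborel)"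

definition half_PtHP :: "nat \<Rightarrow> real \<Rightarrow> real \<Rightarrow> (int \<Rightarrow> int \<Rightarrow> real) \<Rightarrow> int \<Rightarrow> int \<Rightarrow> real" where
  "half_PtHP n hl hr H k m =
     (1/2) * (\<Sum>\<^sub>\<infinity> i. \<Sum>\<^sub>\<infinity> l. dd_P n hl hr i k * H i l * dd_P n hl hr l m)"

end

theory Submission
  imports Defs "HOL-Computational_Algebra.Polynomial"
begin

text \<open>Each \<phi>_k is the limit of the piecewise linear interpolants of P^j \<delta>_k, and passing to
  the limit in P^(j+1) \<delta>_k = P^j (P \<delta>_k) gives the refinement equation
  \<phi>_k(x) = \<Sum>_i P(i,k) \<phi>_i(2x); the substitution x \<mapsto> 2x turns it into G = 1/2 P^T G P.
  If H is another solution that agrees with G outside I_irr and vanishes where the supports of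
  \<phi>_k and \<phi>_m are disjoint, then D = H - G is finitely supported and iterating gives
  D = 2^(-j) (P^j)^T D P^j. The entries of P^j are values of the interpolants at mesh points,
  hence bounded uniformly in j by uniform convergence, so D = 0. Finally, the moment condition of
  degree 0 makes the rows of P sum to 1, so the \<phi>_k form a partition of unity and
  \<Sum>_m G(k,m) = \<integral> \<phi>_k, which is the normalisation by diag(G 1).\<close>

section \<open>Lagrange interpolation\<close>

definition lagrange_basis :: "('a \<Rightarrow> 'b::field) \<Rightarrow> 'a set \<Rightarrow> 'a \<Rightarrow> 'b poly" where
  "lagrange_basis t N j =
     smult (inverse (\<Prod>l\<in>N - {j}. t j - t l)) (\<Prod>l\<in>N - {j}. [:- t l, 1:])"

lemma poly_lagrange_basis:
  "poly (lagrange_basis t N j) x = (\<Prod>l\<in>N - {j}. x - t l) / (\<Prod>l\<in>N - {j}. t j - t l)"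
  by (simp add: lagrange_basis_def poly_prod field_simps)

lemma degree_lagrange_basis:
  assumes "finite N" "j \<in> N"
  shows "degree (lagrange_basis t N j) < card N"
proof -
  have "degree (lagrange_basis t N j) \<le> (\<Sum>l\<in>N - {j}. degree [:- t l, 1:])"
    unfolding lagrange_basis_def
    using degree_prod_sum_le[of "N - {j}" "\<lambda>l. [:- t l, 1:]"] assms(1)
    by (simp add: o_def order.trans[OF degree_smult_le])
  also have "\<dots> = card (N - {j})" by simp
  also have "\<dots> < card N" using assms by (rule card_Diff1_less)
  finally show ?thesis .
qed

lemma poly_lagrange_basis_node:
  assumes "finite N" "inj_on t N" "i \<in> N" "j \<in> N"
  shows "poly (lagrange_basis t N j) (t i) = (if i = j then 1 else 0)"
  using assms by (auto simp: poly_lagrange_basis inj_on_def)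

lemma lagrange_interpolation:
  fixes t :: "'a \<Rightarrow> 'b::field"
  assumes "finite N" "inj_on t N" "degree p < card N"
  shows "poly p x = (\<Sum>j\<in>N. poly p (t j) * poly (lagrange_basis t N j) x)"
proof -
  define q where "q = (\<Sum>j\<in>N. smult (poly p (t j)) (lagrange_basis t N j))"
  have "q = p"
  proof (rule poly_eqI_degree[where A = "t ` N"])
    fix y assume "y \<in> t ` N"
    then obtain i where i: "i \<in> N" "y = t i" by blast
    have "poly q (t i) = (\<Sum>j\<in>N. if j = i then poly p (t j) else 0)"
      unfolding q_def poly_sum using assms i by (intro sum.cong) (auto simp: poly_lagrange_basis_node)
    then show "poly q y = poly p y" using assms(1) i by simp
  next
    have "degree (smult (poly p (t j)) (lagrange_basis t N j)) \<le> card N - 1" if "j \<in> N" for j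
      using degree_smult_le[of "poly p (t j)" "lagrange_basis t N j"]
        degree_lagrange_basis[OF assms(1) that, of t] by linarith
    then have "degree q \<le> card N - 1"
      unfolding q_def by (rule degree_sum_le[OF assms(1)])
    then show "degree q < card (t ` N)"
      using assms by (simp add: card_image)
    show "degree p < card (t ` N)"
      using assms by (simp add: card_image)
  qed
  then have "poly p x = poly q x" by simp
  also have "\<dots> = (\<Sum>j\<in>N. poly p (t j) * poly (lagrange_basis t N j) x)"
    by (simp add: q_def poly_sum)
  finally show ?thesis .
qed

lemma sum_weights_poly_eq_poly:
  fixes t :: "'a \<Rightarrow> 'b::comm_ring_1"
  assumes "\<forall>\<alpha> < d. (\<Sum>j\<in>N. c j * t j ^ \<alpha>) = y ^ \<alpha>" "degree p < d"
  shows "(\<Sum>j\<in>N. c j * poly p (t j)) = poly p y"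
proof -
  have "(\<Sum>j\<in>N. c j * poly p (t j)) = (\<Sum>\<alpha>\<le>degree p. coeff p \<alpha> * (\<Sum>j\<in>N. c j * t j ^ \<alpha>))"
    by (simp add: poly_altdef sum_distrib_left sum.swap[of _ N] algebra_simps)
  also have "\<dots> = (\<Sum>\<alpha>\<le>degree p. coeff p \<alpha> * y ^ \<alpha>)"
    using assms by (intro sum.cong) auto
  also have "\<dots> = poly p y" by (simp add: poly_altdef)
  finally show ?thesis .
qed

lemma ex1_moment_weights:
  fixes t :: "'a \<Rightarrow> 'b::field"
  assumes "finite N" "inj_on t N"
  shows "\<exists>!c. (\<forall>j. j \<notin> N \<longrightarrow> c j = 0) \<and> (\<forall>\<alpha> < card N. (\<Sum>j\<in>N. c j * t j ^ \<alpha>) = y ^ \<alpha>)"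
proof -
  define c\<^sub>0 where "c\<^sub>0 j = (if j \<in> N then poly (lagrange_basis t N j) y else 0)" for j
  show ?thesis
  proof (rule ex1I[of _ c\<^sub>0])
    have "(\<Sum>j\<in>N. c\<^sub>0 j * t j ^ \<alpha>) = y ^ \<alpha>" if "\<alpha> < card N" for \<alpha>
      using lagrange_interpolation[OF assms, of "monom 1 \<alpha>" y] that
      by (simp add: c\<^sub>0_def poly_monom degree_monom_eq mult.commute)
    then show "(\<forall>j. j \<notin> N \<longrightarrow> c\<^sub>0 j = 0) \<and> (\<forall>\<alpha> < card N. (\<Sum>j\<in>N. c\<^sub>0 j * t j ^ \<alpha>) = y ^ \<alpha>)"
      by (simp add: c\<^sub>0_def)
  next
    fix c assume c: "(\<forall>j. j \<notin> N \<longrightarrow> c j = 0) \<and> (\<forall>\<alpha> < card N. (\<Sum>j\<in>N. c j * t j ^ \<alpha>) = y ^ \<alpha>)"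
    show "c = c\<^sub>0"
    proof
      fix j show "c j = c\<^sub>0 j"
      proof (cases "j \<in> N")
        case True
        have "c j = (\<Sum>i\<in>N. if i = j then c i else 0)"
          using True assms(1) by simp
        also have "\<dots> = (\<Sum>i\<in>N. c i * poly (lagrange_basis t N j) (t i))"
          using True assms by (intro sum.cong) (auto simp: poly_lagrange_basis_node)
        also have "\<dots> = poly (lagrange_basis t N j) y"
          using c degree_lagrange_basis[OF assms(1) True, of t]
          by (intro sum_weights_poly_eq_poly[where d = "card N"]) auto
        finally show ?thesis using True by (simp add: c\<^sub>0_def)
      qed (use c in \<open>auto simp: c\<^sub>0_def\<close>)
    qed
  qed
qed

lemma infsum_eq_sum:
  fixes f :: "'a \<Rightarrow> 'b::{comm_monoid_add, t2_space}"
  assumes "finite F" "\<And>x. x \<notin> F \<Longrightarrow> f x = 0"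
  shows "(\<Sum>\<^sub>\<infinity>x. f x) = sum f F"
  using infsum_cong_neutral[of F UNIV f f] assms by simp

lemma sum_sandwich:
  fixes x y :: "'i \<Rightarrow> 'c::comm_semiring_0"
  shows "(\<Sum>i\<in>I. \<Sum>l\<in>L. x i * (\<Sum>a\<in>A. \<Sum>b\<in>B. u i a * D a b * w l b) * y l)
    = (\<Sum>a\<in>A. \<Sum>b\<in>B. (\<Sum>i\<in>I. x i * u i a) * D a b * (\<Sum>l\<in>L. y l * w l b))"
  by (simp add: sum_distrib_left sum_distrib_right mult_ac
      sum.swap[of _ I A] sum.swap[of _ I B] sum.swap[of _ L A] sum.swap[of _ L B])

lemma abs_bilinear_sum_le:
  fixes D :: "'a \<Rightarrow> 'b \<Rightarrow> real"
  assumes "\<And>a. \<bar>x a\<bar> \<le> K\<^sub>1" "\<And>b. \<bar>y b\<bar> \<le> K\<^sub>2"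
  shows "\<bar>\<Sum>a\<in>A. \<Sum>b\<in>B. x a * D a b * y b\<bar> \<le> K\<^sub>1 * K\<^sub>2 * (\<Sum>a\<in>A. \<Sum>b\<in>B. \<bar>D a b\<bar>)"
proof -
  have "0 \<le> K\<^sub>1"
    using assms(1) abs_ge_zero order.trans by blast
  have "\<bar>\<Sum>a\<in>A. \<Sum>b\<in>B. x a * D a b * y b\<bar> \<le> (\<Sum>a\<in>A. \<Sum>b\<in>B. \<bar>x a\<bar> * \<bar>D a b\<bar> * \<bar>y b\<bar>)"
    by (rule order.trans[OF sum_abs sum_mono[OF order.trans[OF sum_abs]]]) (simp add: abs_mult)
  also have "\<dots> \<le> (\<Sum>a\<in>A. \<Sum>b\<in>B. K\<^sub>1 * \<bar>D a b\<bar> * K\<^sub>2)"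
    using assms \<open>0 \<le> K\<^sub>1\<close> by (intro sum_mono mult_mono) auto
  also have "\<dots> = K\<^sub>1 * K\<^sub>2 * (\<Sum>a\<in>A. \<Sum>b\<in>B. \<bar>D a b\<bar>)"
    by (simp add: sum_distrib_left mult_ac)
  finally show ?thesis .
qed

lemma integrable_bounded_support:
  fixes g :: "real \<Rightarrow> real"
  assumes "continuous_on UNIV g" "bounded {x. g x \<noteq> 0}"
  shows "integrable lborel g"
proof -
  obtain c e where supp: "{x. g x \<noteq> 0} \<subseteq> cball c e"
    using assms(2) bounded_subset_cball by blast
  have "integrable lborel (\<lambda>x. indicator (cball c e) x *\<^sub>R g x)"
    by (rule borel_integrable_compact) (auto intro: continuous_on_subset[OF assms(1)])
  also have "(\<lambda>x. indicator (cball c e) x *\<^sub>R g x) = g"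
    using supp by (auto simp: fun_eq_iff indicator_def)
  finally show ?thesis .
qed

lemma bounded_range_bounded_support:
  fixes g :: "real \<Rightarrow> real"
  assumes "continuous_on UNIV g" "bounded {x. g x \<noteq> 0}"
  shows "bounded (range g)"
proof -
  obtain c e where supp: "{x. g x \<noteq> 0} \<subseteq> cball c e"
    using assms(2) bounded_subset_cball by blast
  have "bounded (g ` cball c e)"
    by (intro compact_imp_bounded compact_continuous_image continuous_on_subset[OF assms(1)]) auto
  moreover have "range g \<subseteq> insert 0 (g ` cball c e)"
    using supp by auto
  ultimately show ?thesis by (metis bounded_insert bounded_subset)
qed

lemma eq_0_if_abs_le_geometric:
  fixes c B :: real
  assumes "\<forall>\<^sub>F j in sequentially. \<bar>c\<bar> \<le> (1/2) ^ j * B"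
  shows "c = 0"
proof -
  have lim: "(\<lambda>j. (1/2::real) ^ j * B) \<longlonglongrightarrow> 0 * B"
    by (intro tendsto_mult_right LIMSEQ_realpow_zero) auto
  have "\<bar>c\<bar> \<le> 0 * B"
    by (rule tendsto_le[OF trivial_limit_sequentially lim tendsto_const assms])
  then show ?thesis by simp
qed

section \<open>The mesh and piecewise linear interpolation\<close>

lemma strict_mono_dd_mesh:
  assumes "hl > 0" "hr > 0"
  shows "strict_mono (dd_mesh hl hr)"
proof (rule strict_monoI)
  fix a b :: int assume "a < b"
  then show "dd_mesh hl hr a < dd_mesh hl hr b"
    using assms mult_neg_pos[of "real_of_int a" hl]
    by (auto simp: dd_mesh_def intro: order.strict_trans2)
qed

lemma dd_mesh_mult:
  assumes "c \<ge> 0"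
  shows "dd_mesh hl hr (c * k) = of_int c * dd_mesh hl hr k"
  using assms by (auto simp: dd_mesh_def mult_less_0_iff)

lemma dd_mesh_cell:
  assumes "hl > 0" "hr > 0"
  shows "\<exists>m. dd_mesh hl hr m \<le> x \<and> x < dd_mesh hl hr (m + 1)"
proof (cases "x \<ge> 0")
  case True
  define m where "m = \<lfloor>x / hr\<rfloor>"
  have "of_int m \<le> x / hr" "x / hr < of_int m + 1"
    unfolding m_def by linarith+
  then have "of_int m * hr \<le> x" "x < (of_int m + 1) * hr"
    using assms(2) by (simp_all add: field_simps)
  moreover have "m \<ge> 0"
    using True assms(2) by (simp add: m_def)
  ultimately show ?thesis
    by (intro exI[of _ m]) (simp add: dd_mesh_def)
next
  case False
  define m where "m = \<lfloor>x / hl\<rfloor>"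
  have "of_int m \<le> x / hl" "x / hl < of_int m + 1"
    unfolding m_def by linarith+
  then have lower: "of_int m * hl \<le> x" and upper: "x < (of_int m + 1) * hl"
    using assms(1) by (simp_all add: field_simps)
  have "m < 0"
    using assms(1) False by (simp add: m_def divide_less_0_iff floor_less_iff)
  have "x < dd_mesh hl hr (m + 1)"
  proof (cases "m + 1 < 0")
    case True
    then show ?thesis using upper by (simp add: dd_mesh_def)
  next
    case False
    then have "m + 1 = 0" using \<open>m < 0\<close> by simp
    then show ?thesis using \<open>\<not> x \<ge> 0\<close> by (simp add: dd_mesh_def)
  qed
  then show ?thesis
    using lower \<open>m < 0\<close> by (intro exI[of _ m]) (simp add: dd_mesh_def)
qed

lemma Greatest_strict_mono_cell:
  fixes X :: "int \<Rightarrow> 'a::linorder"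
  assumes "strict_mono X" "X m \<le> x" "x < X (m + 1)"
  shows "(GREATEST m. X m \<le> x) = m"
proof (rule Greatest_equality)
  fix m' assume "X m' \<le> x"
  then have "m' < m + 1" using assms by (metis order.strict_trans1 strict_mono_less)
  then show "m' \<le> m" by simp
qed (rule assms(2))

lemma pl_interp_cell:
  assumes "strict_mono X" "X m \<le> x" "x < X (m + 1)"
  shows "pl_interp X Y x = Y m + (Y (m + 1) - Y m) * (x - X m) / (X (m + 1) - X m)"
  using Greatest_strict_mono_cell[OF assms] by (simp add: pl_interp_def)

lemma pl_interp_node:
  assumes "strict_mono X"
  shows "pl_interp X Y (X m) = Y m"
  using pl_interp_cell[OF assms order.refl, of m] strict_monoD[OF assms, of m "m + 1"] by simp

lemma pl_interp_sum:
  "pl_interp X (\<lambda>m. \<Sum>a\<in>A. w a * Y a m) x = (\<Sum>a\<in>A. w a * pl_interp X (Y a) x)"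
proof -
  define m where "m = (GREATEST m. X m \<le> x)"
  define r where "r = (x - X m) / (X (m + 1) - X m)"
  have "pl_interp X (\<lambda>m. \<Sum>a\<in>A. w a * Y a m) x
      = (\<Sum>a\<in>A. w a * Y a m) + ((\<Sum>a\<in>A. w a * Y a (m + 1)) - (\<Sum>a\<in>A. w a * Y a m)) * r"
    by (simp add: pl_interp_def Let_def m_def r_def)
  also have "\<dots> = (\<Sum>a\<in>A. w a * (Y a m + (Y a (m + 1) - Y a m) * r))"
    by (simp add: sum_distrib_left sum_distrib_right sum.distrib sum_subtractf algebra_simps)
  also have "\<dots> = (\<Sum>a\<in>A. w a * pl_interp X (Y a) x)"
    by (simp add: pl_interp_def Let_def m_def r_def)
  finally show ?thesis .
qed

lemma pl_interp_rescale:
  assumes "c > 0"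
  shows "pl_interp (\<lambda>m. X m / c) Y x = pl_interp X Y (c * x)"
proof -
  have cell: "(\<lambda>m. X m / c \<le> x) = (\<lambda>m. X m \<le> c * x)"
    using assms by (auto simp: fun_eq_iff field_simps)
  define m where "m = (GREATEST m. X m \<le> c * x)"
  have "(x - X m / c) / (X (m + 1) / c - X m / c) = (c * x - X m) / (X (m + 1) - X m)"
    using assms by (simp add: divide_simps)
  then show ?thesis
    unfolding pl_interp_def Let_def cell m_def[symmetric] by (metis times_divide_eq_right)
qed

section \<open>The subdivision scheme\<close>

locale dd_scheme =
  fixes n :: nat and hl hr :: real
  assumes n_pos: "n \<ge> 1" and hl_pos: "hl > 0" and hr_pos: "hr > 0"
begin

abbreviation t :: "int \<Rightarrow> real" where "t \<equiv> dd_mesh hl hr"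
abbreviation P :: "int \<Rightarrow> int \<Rightarrow> real" where "P \<equiv> dd_P n hl hr"
abbreviation V :: "(int \<Rightarrow> real) \<Rightarrow> int \<Rightarrow> real" where "V \<equiv> dd_subd n hl hr"

lemma strict_mono_mesh: "strict_mono t"
  using hl_pos hr_pos by (rule strict_mono_dd_mesh)

definition row_supp :: "int \<Rightarrow> int set" where
  "row_supp i = {i div 2 - int n + 1 .. i div 2 + int n}"

definition col_supp :: "int \<Rightarrow> int set" where
  "col_supp k = {2 * k - 2 * int n .. 2 * k + 2 * int n}"

lemma finite_row_supp [simp]: "finite (row_supp i)"
  and finite_col_supp [simp]: "finite (col_supp k)"
  by (simp_all add: row_supp_def col_supp_def)

lemma dd_P_odd_row:
  assumes "odd i"
  shows "(\<forall>j. j \<notin> row_supp i \<longrightarrow> P i j = 0)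
    \<and> (\<forall>\<alpha> < 2 * n. (\<Sum>j\<in>row_supp i. P i j * t j ^ \<alpha>) = (t i / 2) ^ \<alpha>)"
    (is "?moments (P i)")
proof -
  have card: "card (row_supp i) = 2 * n" by (simp add: row_supp_def)
  have ex1: "\<exists>!c. ?moments c"
    using ex1_moment_weights[where N = "row_supp i" and t = t and y = "t i / 2",
        OF finite_row_supp strict_mono_imp_inj_on[OF strict_mono_mesh]]
    unfolding card .
  have "P i = (THE c. ?moments c)"
    by (rule ext) (simp only: dd_P_def Let_def row_supp_def if_not_P[OF assms])
  then show ?thesis using theI'[OF ex1] by (simp only:)
qed

lemma dd_P_eq_0: "j \<notin> row_supp i \<Longrightarrow> P i j = 0"
  using dd_P_odd_row n_pos by (cases "even i") (auto simp: dd_P_def row_supp_def)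

lemma dd_P_eq_0_col: "i \<notin> col_supp k \<Longrightarrow> P i k = 0"
  by (rule dd_P_eq_0) (auto simp: row_supp_def col_supp_def)

lemma dd_P_row_sum: "(\<Sum>j\<in>row_supp i. P i j) = 1"
proof (cases "even i")
  case True
  then have "(\<Sum>j\<in>row_supp i. P i j) = (\<Sum>j\<in>row_supp i. if j = i div 2 then 1 else 0)"
    by (intro sum.cong) (auto simp: dd_P_def)
  then show ?thesis using n_pos by (simp add: row_supp_def)
next
  case False
  then have "\<forall>\<alpha> < 2 * n. (\<Sum>j\<in>row_supp i. P i j * t j ^ \<alpha>) = (t i / 2) ^ \<alpha>"
    using dd_P_odd_row by blast
  from this[rule_format, of 0] n_pos show ?thesis by simp
qed

lemma dd_subd_eq: "V c i = (\<Sum>j\<in>row_supp i. P i j * c j)"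
  unfolding dd_subd_def by (rule infsum_eq_sum) (auto simp: dd_P_eq_0)

lemma half_PtHP_eq:
  "half_PtHP n hl hr H k m = 1/2 * (\<Sum>i\<in>col_supp k. \<Sum>l\<in>col_supp m. P i k * H i l * P l m)"
proof -
  have "(\<Sum>\<^sub>\<infinity>l. P i k * H i l * P l m) = (\<Sum>l\<in>col_supp m. P i k * H i l * P l m)" for i
    by (rule infsum_eq_sum) (auto simp: dd_P_eq_0_col)
  moreover have "(\<Sum>\<^sub>\<infinity>i. \<Sum>l\<in>col_supp m. P i k * H i l * P l m)
      = (\<Sum>i\<in>col_supp k. \<Sum>l\<in>col_supp m. P i k * H i l * P l m)"
    by (rule infsum_eq_sum) (auto simp: dd_P_eq_0_col)
  ultimately show ?thesis by (simp add: half_PtHP_def)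
qed

lemma dd_subd_sum: "V (\<lambda>m. \<Sum>a\<in>A. w a * c a m) = (\<lambda>m. \<Sum>a\<in>A. w a * V (c a) m)"
  unfolding dd_subd_eq sum_distrib_left by (subst sum.swap) (simp add: mult.left_commute)

lemma dd_subd_funpow_sum:
  "(V ^^ j) (\<lambda>m. \<Sum>a\<in>A. w a * c a m) = (\<lambda>m. \<Sum>a\<in>A. w a * (V ^^ j) (c a) m)"
  by (induction j) (simp_all add: dd_subd_sum)

lemma dd_subd_unit_seq: "V (unit_seq k) = (\<lambda>m. \<Sum>i\<in>col_supp k. P i k * unit_seq i m)"
proof
  fix m
  have "V (unit_seq k) m = (\<Sum>j\<in>row_supp m. if j = k then P m j else 0)"
    unfolding dd_subd_eq unit_seq_def by (intro sum.cong) auto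
  also have "\<dots> = P m k"
    using dd_P_eq_0[of k m] by auto
  also have "\<dots> = (\<Sum>i\<in>col_supp k. if i = m then P i k else 0)"
    using dd_P_eq_0_col[of m k] by auto
  also have "\<dots> = (\<Sum>i\<in>col_supp k. P i k * unit_seq i m)"
    unfolding unit_seq_def by (intro sum.cong) auto
  finally show "V (unit_seq k) m = (\<Sum>i\<in>col_supp k. P i k * unit_seq i m)" .
qed

definition basic_seq :: "nat \<Rightarrow> int \<Rightarrow> int \<Rightarrow> real" where
  "basic_seq j k = (V ^^ j) (unit_seq k)"

lemma basic_seq_0: "basic_seq 0 k = unit_seq k"
  and basic_seq_Suc: "basic_seq (Suc j) k = V (basic_seq j k)"
  by (simp_all add: basic_seq_def)

lemma basic_seq_Suc_col: "basic_seq (Suc j) k a = (\<Sum>i\<in>col_supp k. P i k * basic_seq j i a)"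
  unfolding basic_seq_def funpow_Suc_right comp_def dd_subd_unit_seq dd_subd_funpow_sum ..

lemma basic_seq_support:
  assumes "basic_seq j k a \<noteq> 0"
  shows "\<bar>a - 2 ^ j * k\<bar> \<le> (2 ^ j - 1) * (2 * int n)"
  using assms
proof (induction j arbitrary: a)
  case 0
  then show ?case by (simp add: basic_seq_0 unit_seq_def split: if_splits)
next
  case (Suc j)
  from Suc.prems have "(\<Sum>l\<in>row_supp a. P a l * basic_seq j k l) \<noteq> 0"
    unfolding basic_seq_Suc dd_subd_eq .
  then obtain l where "l \<in> row_supp a" "P a l * basic_seq j k l \<noteq> 0"
    by (meson sum.neutral)
  then have l: "l \<in> row_supp a" "basic_seq j k l \<noteq> 0" by simp_all
  have "\<bar>l - 2 ^ j * k\<bar> \<le> (2 ^ j - 1) * (2 * int n)" by (rule Suc.IH[OF l(2)])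
  moreover have "\<bar>a - 2 * l\<bar> \<le> 2 * int n"
  proof -
    have "2 * (a div 2) \<le> a" "a \<le> 2 * (a div 2) + 1" by presburger+
    with l(1) show ?thesis unfolding row_supp_def abs_le_iff by auto
  qed
  moreover have "(2::int) ^ Suc j * k = 2 * (2 ^ j * k)"
    and "(2 ^ Suc j - 1) * (2 * int n) = 2 * ((2 ^ j - 1) * (2 * int n)) + 2 * int n"
    by (simp_all add: algebra_simps)
  ultimately show ?case unfolding abs_le_iff by linarith
qed

lemma finite_basic_seq_support: "finite {k. basic_seq j k a \<noteq> 0}"
proof (rule finite_subset)
  let ?B = "\<bar>a\<bar> + (2 ^ j - 1) * (2 * int n)"
  show "{k. basic_seq j k a \<noteq> 0} \<subseteq> {- ?B .. ?B}"
  proof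
    fix k assume "k \<in> {k. basic_seq j k a \<noteq> 0}"
    then have "\<bar>a - 2 ^ j * k\<bar> \<le> (2 ^ j - 1) * (2 * int n)"
      by (simp add: basic_seq_support)
    moreover have "\<bar>k\<bar> \<le> \<bar>2 ^ j * k\<bar>"
      by (simp add: abs_mult mult_le_cancel_right1)
    ultimately show "k \<in> {- ?B .. ?B}" by auto
  qed
qed simp

lemma basic_seq_sum:
  assumes "finite W" "{k. basic_seq j k a \<noteq> 0} \<subseteq> W"
  shows "(\<Sum>k\<in>W. basic_seq j k a) = 1"
  using assms
proof (induction j arbitrary: a W)
  case 0
  then have "a \<in> W" by (auto simp: basic_seq_0 unit_seq_def)
  with 0 show ?case by (simp add: basic_seq_0 unit_seq_def)
next
  case (Suc j)
  define W' where "W' = W \<union> (\<Union>l\<in>row_supp a. {k. basic_seq j k l \<noteq> 0})"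
  have "finite W'" using Suc.prems(1) finite_basic_seq_support by (simp add: W'_def)
  have "(\<Sum>k\<in>W. basic_seq (Suc j) k a) = (\<Sum>k\<in>W'. basic_seq (Suc j) k a)"
    using Suc.prems(2) \<open>finite W'\<close> by (intro sum.mono_neutral_left) (auto simp: W'_def)
  also have "\<dots> = (\<Sum>l\<in>row_supp a. P a l * (\<Sum>k\<in>W'. basic_seq j k l))"
    by (simp add: basic_seq_Suc dd_subd_eq sum_distrib_left sum.swap[of _ W'])
  also have "\<dots> = (\<Sum>l\<in>row_supp a. P a l)"
    using Suc.IH[OF \<open>finite W'\<close>] by (intro sum.cong) (auto simp: W'_def)
  also have "\<dots> = 1" by (rule dd_P_row_sum)
  finally show ?case .
qed

definition interp :: "nat \<Rightarrow> int \<Rightarrow> real \<Rightarrow> real" where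
  "interp j k = pl_interp (\<lambda>m. t m / 2 ^ j) (basic_seq j k)"

lemma strict_mono_scaled_mesh: "strict_mono (\<lambda>m. t m / 2 ^ j)"
  using strict_mono_mesh by (simp add: strict_mono_def divide_strict_right_mono)

lemma scaled_mesh_cell: "\<exists>m. t m / 2 ^ j \<le> x \<and> x < t (m + 1) / 2 ^ j"
proof -
  obtain m where "t m \<le> 2 ^ j * x" "2 ^ j * x < t (m + 1)"
    using dd_mesh_cell[OF hl_pos hr_pos] by blast
  then show ?thesis by (intro exI[of _ m]) (simp add: field_simps)
qed

lemma interp_node: "interp j k (t a / 2 ^ j) = basic_seq j k a"
  unfolding interp_def by (rule pl_interp_node[OF strict_mono_scaled_mesh])

lemma interp_Suc: "interp (Suc j) k x = (\<Sum>i\<in>col_supp k. P i k * interp j i (2 * x))"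
proof -
  have "basic_seq (Suc j) k = (\<lambda>a. \<Sum>i\<in>col_supp k. P i k * basic_seq j i a)"
    by (rule ext) (rule basic_seq_Suc_col)
  moreover have "(\<lambda>m. t m / 2 ^ Suc j) = (\<lambda>m. t m / 2 ^ j / 2)" by (simp add: mult.commute)
  ultimately show ?thesis
    unfolding interp_def by (simp only: pl_interp_rescale pl_interp_sum zero_less_numeral)
qed

definition supp_interval :: "int \<Rightarrow> real set" where
  "supp_interval k = {t (k - 2 * int n - 1) ..< t (k + 2 * int n + 1)}"

lemma interp_support:
  assumes "interp j k x \<noteq> 0"
  shows "x \<in> supp_interval k"
proof -
  obtain m where cell: "t m / 2 ^ j \<le> x" "x < t (m + 1) / 2 ^ j"
    using scaled_mesh_cell by blast
  have "basic_seq j k m \<noteq> 0 \<or> basic_seq j k (m + 1) \<noteq> 0"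
    using assms pl_interp_cell[OF strict_mono_scaled_mesh cell] by (auto simp: interp_def)
  then have "\<bar>m - 2 ^ j * k\<bar> \<le> (2 ^ j - 1) * (2 * int n)
      \<or> \<bar>m + 1 - 2 ^ j * k\<bar> \<le> (2 ^ j - 1) * (2 * int n)"
    using basic_seq_support by blast
  then have lower: "2 ^ j * k - (2 ^ j - 1) * (2 * int n) - 1 \<le> m"
    and upper: "m + 1 \<le> 2 ^ j * k + (2 ^ j - 1) * (2 * int n) + 1"
    unfolding abs_le_iff by auto
  have "2 ^ j * (k - 2 * int n - 1) \<le> m" "m + 1 \<le> 2 ^ j * (k + 2 * int n + 1)"
    using lower upper one_le_power[of "2::int" j] by (simp_all add: algebra_simps, linarith+)
  then have "t (2 ^ j * (k - 2 * int n - 1)) \<le> t m" "t (m + 1) \<le> t (2 ^ j * (k + 2 * int n + 1))"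
    by (simp_all add: strict_mono_less_eq[OF strict_mono_mesh])
  moreover have scale: "t (2 ^ j * p) = 2 ^ j * t p" for p
    using dd_mesh_mult[of "2 ^ j" hl hr p] by simp
  ultimately have "t (k - 2 * int n - 1) \<le> t m / 2 ^ j" "t (m + 1) / 2 ^ j \<le> t (k + 2 * int n + 1)"
    unfolding scale by (simp_all add: field_simps)
  with cell show ?thesis
    unfolding supp_interval_def by simp
qed

lemma supp_interval_overlap:
  assumes "x \<in> supp_interval k" "x \<in> supp_interval m"
  shows "\<bar>k - m\<bar> \<le> 4 * int n + 1"
proof -
  have "t (k - 2 * int n - 1) < t (m + 2 * int n + 1)" "t (m - 2 * int n - 1) < t (k + 2 * int n + 1)"
    using assms by (auto simp: supp_interval_def)
  then show ?thesis by (simp add: strict_mono_less[OF strict_mono_mesh])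
qed

lemma finite_supp_interval_indices: "finite {k. x \<in> supp_interval k}"
proof -
  obtain m where "t m \<le> x" "x < t (m + 1)"
    using dd_mesh_cell[OF hl_pos hr_pos] by blast
  moreover have "t (m - 2 * int n - 1) \<le> t m" "t (m + 1) \<le> t (m + 2 * int n + 1)"
    by (simp_all add: strict_mono_less_eq[OF strict_mono_mesh])
  ultimately have "x \<in> supp_interval m" by (simp add: supp_interval_def)
  have "\<bar>k - m\<bar> \<le> 4 * int n + 1" if "x \<in> supp_interval k" for k
    using supp_interval_overlap[OF that \<open>x \<in> supp_interval m\<close>] .
  then have "{k. x \<in> supp_interval k} \<subseteq> {m - (4 * int n + 1) .. m + (4 * int n + 1)}"
    by (force simp: abs_le_iff)
  then show ?thesis by (rule finite_subset) simp
qed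

lemma interp_sum:
  assumes "finite W" "{k. interp j k x \<noteq> 0} \<subseteq> W"
  shows "(\<Sum>k\<in>W. interp j k x) = 1"
proof -
  obtain m where cell: "t m / 2 ^ j \<le> x" "x < t (m + 1) / 2 ^ j"
    using scaled_mesh_cell by blast
  define W' where "W' = W \<union> {k. basic_seq j k m \<noteq> 0} \<union> {k. basic_seq j k (m + 1) \<noteq> 0}"
  have "finite W'" using assms(1) finite_basic_seq_support by (simp add: W'_def)
  have "(\<Sum>k\<in>W. interp j k x) = (\<Sum>k\<in>W'. interp j k x)"
    using assms(2) \<open>finite W'\<close> by (intro sum.mono_neutral_left) (auto simp: W'_def)
  also have "\<dots> = pl_interp (\<lambda>m. t m / 2 ^ j) (\<lambda>a. \<Sum>k\<in>W'. basic_seq j k a) x"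
    by (simp add: interp_def pl_interp_sum[where w = "\<lambda>_. 1", simplified])
  also have "\<dots> = 1"
    using pl_interp_cell[OF strict_mono_scaled_mesh cell] \<open>finite W'\<close>
    by (simp add: basic_seq_sum W'_def subset_iff)
  finally show ?thesis .
qed

end

section \<open>Basic limit functions and their Gram matrix\<close>

locale dd_basic_limits = dd_scheme +
  fixes \<phi> :: "int \<Rightarrow> real \<Rightarrow> real"
  assumes basic_limit_family: "is_basic_limit_family n hl hr \<phi>"
begin

lemma continuous_on_phi: "continuous_on UNIV (\<phi> k)"
  and bounded_support_phi: "bounded {x. \<phi> k x \<noteq> 0}"
  and uniform_limit_interp: "uniform_limit UNIV (\<lambda>j. interp j k) (\<phi> k) sequentially"
  using basic_limit_family
  by (simp_all add: is_basic_limit_family_def interp_def basic_seq_def)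

lemma interp_tendsto: "(\<lambda>j. interp j k x) \<longlonglongrightarrow> \<phi> k x"
  using tendsto_uniform_limitI[OF uniform_limit_interp] by simp

lemma phi_support:
  assumes "\<phi> k x \<noteq> 0"
  shows "x \<in> supp_interval k"
proof (rule ccontr)
  assume "x \<notin> supp_interval k"
  then have "(\<lambda>j. interp j k x) = (\<lambda>j. 0)"
    using interp_support by auto
  then have "(\<lambda>j. 0) \<longlonglongrightarrow> \<phi> k x"
    using interp_tendsto[of k x] by simp
  with assms show False by (simp add: LIMSEQ_const_iff)
qed

lemma refinement_equation: "\<phi> k x = (\<Sum>i\<in>col_supp k. P i k * \<phi> i (2 * x))"
proof (rule LIMSEQ_unique)
  show "(\<lambda>j. interp (Suc j) k x) \<longlonglongrightarrow> \<phi> k x"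
    using interp_tendsto by (rule LIMSEQ_Suc)
  show "(\<lambda>j. interp (Suc j) k x) \<longlonglongrightarrow> (\<Sum>i\<in>col_supp k. P i k * \<phi> i (2 * x))"
    unfolding interp_Suc by (intro tendsto_sum tendsto_mult_left interp_tendsto)
qed

lemma phi_sum:
  assumes "finite W" "{k. \<phi> k x \<noteq> 0} \<subseteq> W"
  shows "(\<Sum>k\<in>W. \<phi> k x) = 1"
proof -
  define W\<^sub>0 where "W\<^sub>0 = {k. x \<in> supp_interval k}"
  have "finite W\<^sub>0" unfolding W\<^sub>0_def by (rule finite_supp_interval_indices)
  have "(\<Sum>k\<in>W\<^sub>0. \<phi> k x) = 1"
  proof (rule LIMSEQ_unique)
    show "(\<lambda>j. \<Sum>k\<in>W\<^sub>0. interp j k x) \<longlonglongrightarrow> (\<Sum>k\<in>W\<^sub>0. \<phi> k x)"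
      by (intro tendsto_sum interp_tendsto)
    show "(\<lambda>j. \<Sum>k\<in>W\<^sub>0. interp j k x) \<longlonglongrightarrow> 1"
      using interp_sum[OF \<open>finite W\<^sub>0\<close>] interp_support by (simp add: W\<^sub>0_def subset_iff)
  qed
  moreover have "(\<Sum>k\<in>W. \<phi> k x) = (\<Sum>k\<in>W \<union> W\<^sub>0. \<phi> k x)" "(\<Sum>k\<in>W\<^sub>0. \<phi> k x) = (\<Sum>k\<in>W \<union> W\<^sub>0. \<phi> k x)"
    using assms \<open>finite W\<^sub>0\<close> phi_support
    by (auto intro!: sum.mono_neutral_left simp: W\<^sub>0_def)
  ultimately show ?thesis by simp
qed

lemma phi_overlap: "\<phi> k x * \<phi> m x \<noteq> 0 \<Longrightarrow> \<bar>k - m\<bar> \<le> 4 * int n + 1"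
  by (rule supp_interval_overlap[OF phi_support phi_support]) auto

lemma integrable_phi_mult: "integrable lborel (\<lambda>x. \<phi> k x * \<phi> m x)"
proof (rule integrable_bounded_support)
  show "continuous_on UNIV (\<lambda>x. \<phi> k x * \<phi> m x)"
    by (intro continuous_intros continuous_on_phi)
  show "bounded {x. \<phi> k x * \<phi> m x \<noteq> 0}"
    by (rule bounded_subset[OF bounded_support_phi[of k]]) auto
qed

lemma gram_eq_0:
  assumes "\<And>x. \<phi> k x * \<phi> m x = 0"
  shows "gram \<phi> k m = 0"
proof -
  have "(\<lambda>x. \<phi> k x * \<phi> m x) = (\<lambda>x. 0)" using assms by auto
  then show ?thesis by (simp add: gram_def)
qed

lemma gram_dilate: "(\<integral>x. \<phi> k (2 * x) * \<phi> m (2 * x) \<partial>lborel) = gram \<phi> k m / 2"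
  using lborel_integral_real_affine[of 2 "\<lambda>y. \<phi> k y * \<phi> m y" 0] by (simp add: gram_def)

lemma gram_refinement: "gram \<phi> = half_PtHP n hl hr (gram \<phi>)"
proof (intro ext)
  fix k m
  have int2: "integrable lborel (\<lambda>x. \<phi> i (2 * x) * \<phi> l (2 * x))" for i l
    using lborel_integrable_real_affine[OF integrable_phi_mult[of i l], of 2 0] by simp
  have "gram \<phi> k m = (\<integral>x. (\<Sum>i\<in>col_supp k. \<Sum>l\<in>col_supp m.
      P i k * P l m * (\<phi> i (2 * x) * \<phi> l (2 * x))) \<partial>lborel)"
    unfolding gram_def
    by (subst (1 2) refinement_equation) (simp add: sum_product mult_ac)
  also have "\<dots> = (\<Sum>i\<in>col_supp k. \<Sum>l\<in>col_supp m.
      P i k * P l m * (\<integral>x. \<phi> i (2 * x) * \<phi> l (2 * x) \<partial>lborel))"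
    by (simp add: int2)
  also have "\<dots> = half_PtHP n hl hr (gram \<phi>) k m"
    unfolding gram_dilate by (simp add: half_PtHP_eq sum_distrib_left mult_ac)
  finally show "gram \<phi> k m = half_PtHP n hl hr (gram \<phi>) k m" .
qed

lemma basic_seq_eventually_bounded: "\<exists>K. \<forall>\<^sub>F j in sequentially. \<forall>a. \<bar>basic_seq j k a\<bar> \<le> K"
proof -
  obtain B where B: "\<And>x. \<bar>\<phi> k x\<bar> \<le> B"
    using bounded_range_bounded_support[OF continuous_on_phi bounded_support_phi]
    by (auto simp: bounded_real)
  have "\<forall>\<^sub>F j in sequentially. \<forall>x\<in>UNIV. dist (interp j k x) (\<phi> k x) < 1"
    using uniform_limit_interp by (rule uniform_limitD) simp
  then have "\<forall>\<^sub>F j in sequentially. \<forall>a. \<bar>basic_seq j k a\<bar> \<le> B + 1"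
  proof (rule eventually_mono)
    fix j assume close: "\<forall>x\<in>UNIV. dist (interp j k x) (\<phi> k x) < 1"
    show "\<forall>a. \<bar>basic_seq j k a\<bar> \<le> B + 1"
    proof
      fix a
      have "\<bar>interp j k (t a / 2 ^ j) - \<phi> k (t a / 2 ^ j)\<bar> < 1"
        using close by (simp add: dist_real_def)
      then show "\<bar>basic_seq j k a\<bar> \<le> B + 1"
        using B[of "t a / 2 ^ j"] by (simp add: interp_node)
    qed
  qed
  then show ?thesis by blast
qed

text \<open>Since (P^j)(a,k) = basic_seq j k a, this says D = 2^(-j) (P^j)^T D P^j.\<close>

lemma half_PtHP_fixed_point_iterate:
  assumes "finite A" and supp: "\<And>a b. D a b \<noteq> 0 \<Longrightarrow> a \<in> A \<and> b \<in> A"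
    and fixed: "D = half_PtHP n hl hr D"
  shows "D k m = (1/2) ^ j * (\<Sum>a\<in>A. \<Sum>b\<in>A. basic_seq j k a * D a b * basic_seq j m b)"
proof (induction j arbitrary: k m)
  case 0
  have "(\<Sum>a\<in>A. \<Sum>b\<in>A. basic_seq 0 k a * D a b * basic_seq 0 m b)
      = (\<Sum>a\<in>A. if a = k then \<Sum>b\<in>A. if b = m then D a b else 0 else 0)"
    by (auto simp: basic_seq_0 unit_seq_def intro!: sum.cong)
  also have "\<dots> = D k m"
    using assms(1) supp[of k m] by auto
  finally show ?case by simp
next
  case (Suc j)
  have "D k m = 1/2 * (\<Sum>i\<in>col_supp k. \<Sum>l\<in>col_supp m. P i k * D i l * P l m)"
    by (subst fixed) (rule half_PtHP_eq)
  also have "\<dots> = (1/2) ^ Suc j * (\<Sum>i\<in>col_supp k. \<Sum>l\<in>col_supp m.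
      P i k * (\<Sum>a\<in>A. \<Sum>b\<in>A. basic_seq j i a * D a b * basic_seq j l b) * P l m)"
    by (subst (1) Suc.IH) (simp add: sum_distrib_left mult_ac)
  also have "\<dots> = (1/2) ^ Suc j * (\<Sum>a\<in>A. \<Sum>b\<in>A. basic_seq (Suc j) k a * D a b * basic_seq (Suc j) m b)"
    by (simp only: sum_sandwich basic_seq_Suc_col)
  finally show ?case .
qed

lemma half_PtHP_fixed_point_eq_0:
  assumes "finite A" and supp: "\<And>a b. D a b \<noteq> 0 \<Longrightarrow> a \<in> A \<and> b \<in> A"
    and fixed: "D = half_PtHP n hl hr D"
  shows "D k m = 0"
proof -
  obtain K\<^sub>1 K\<^sub>2 where
    "\<forall>\<^sub>F j in sequentially. \<forall>a. \<bar>basic_seq j k a\<bar> \<le> K\<^sub>1"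
    "\<forall>\<^sub>F j in sequentially. \<forall>b. \<bar>basic_seq j m b\<bar> \<le> K\<^sub>2"
    using basic_seq_eventually_bounded by metis
  then have "\<forall>\<^sub>F j in sequentially. \<bar>D k m\<bar> \<le> (1/2) ^ j * (K\<^sub>1 * K\<^sub>2 * (\<Sum>a\<in>A. \<Sum>b\<in>A. \<bar>D a b\<bar>))"
  proof eventually_elim
    case (elim j)
    let ?S = "\<Sum>a\<in>A. \<Sum>b\<in>A. basic_seq j k a * D a b * basic_seq j m b"
    have "\<bar>D k m\<bar> = \<bar>(1/2) ^ j * ?S\<bar>"
      using half_PtHP_fixed_point_iterate[OF assms] by (rule arg_cong)
    also have "\<dots> = (1/2) ^ j * \<bar>?S\<bar>"
      by (simp add: abs_mult)
    also have "\<dots> \<le> (1/2) ^ j * (K\<^sub>1 * K\<^sub>2 * (\<Sum>a\<in>A. \<Sum>b\<in>A. \<bar>D a b\<bar>))"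
      using elim by (intro mult_left_mono abs_bilinear_sum_le) auto
    finally show ?case .
  qed
  then show ?thesis by (rule eq_0_if_abs_le_geometric)
qed

lemma gram_unique:
  assumes fixed: "H = half_PtHP n hl hr H"
    and agree: "\<And>k m. k \<notin> I_irr n \<Longrightarrow> m \<notin> I_irr n \<Longrightarrow> H k m = gram \<phi> k m"
    and disjoint: "\<And>k m. (\<And>x. \<phi> k x * \<phi> m x = 0) \<Longrightarrow> H k m = 0"
  shows "H = gram \<phi>"
proof -
  define D where "D k m = H k m - gram \<phi> k m" for k m
  define A where "A = {2 - 2 * int n - (4 * int n + 1) .. 2 * int n - 2 + (4 * int n + 1)}"
  have "D = half_PtHP n hl hr D"
  proof (intro ext)
    fix k m
    have "D k m = half_PtHP n hl hr H k m - half_PtHP n hl hr (gram \<phi>) k m"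
      unfolding D_def by (subst fixed, subst gram_refinement) (rule refl)
    also have "\<dots> = half_PtHP n hl hr D k m"
      by (simp add: half_PtHP_eq D_def algebra_simps sum_subtractf)
    finally show "D k m = half_PtHP n hl hr D k m" .
  qed
  moreover have "a \<in> A \<and> b \<in> A" if "D a b \<noteq> 0" for a b
  proof -
    have "a \<in> I_irr n \<or> b \<in> I_irr n"
    proof (rule ccontr)
      assume "\<not> (a \<in> I_irr n \<or> b \<in> I_irr n)"
      then have "H a b = gram \<phi> a b" by (simp add: agree)
      with that show False by (simp add: D_def)
    qed
    moreover have "\<not> (\<forall>x. \<phi> a x * \<phi> b x = 0)"
    proof
      assume "\<forall>x. \<phi> a x * \<phi> b x = 0"
      then have "H a b = 0" "gram \<phi> a b = 0"
        by (simp_all add: disjoint gram_eq_0)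
      with that show False by (simp add: D_def)
    qed
    then obtain x where "\<phi> a x * \<phi> b x \<noteq> 0" by blast
    then have "\<bar>a - b\<bar> \<le> 4 * int n + 1" by (rule phi_overlap)
    ultimately show ?thesis by (auto simp: A_def I_irr_def)
  qed
  ultimately have "D k m = 0" for k m
    by (intro half_PtHP_fixed_point_eq_0[of A]) (auto simp: A_def)
  then show ?thesis by (auto simp: D_def)
qed

lemma gram_row_sum: "(\<Sum>\<^sub>\<infinity>m. gram \<phi> k m) = (\<integral>x. \<phi> k x \<partial>lborel)"
proof -
  define K where "K = {k - (4 * int n + 1) .. k + (4 * int n + 1)}"
  have K: "m \<in> K" if "\<phi> k x * \<phi> m x \<noteq> 0" for x m
    using phi_overlap[OF that] by (auto simp: K_def)
  have "gram \<phi> k m = 0" if "m \<notin> K" for m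
    by (rule gram_eq_0) (use K that in blast)
  then have "(\<Sum>\<^sub>\<infinity>m. gram \<phi> k m) = (\<Sum>m\<in>K. gram \<phi> k m)"
    by (intro infsum_eq_sum) (auto simp: K_def)
  also have "\<dots> = (\<integral>x. (\<Sum>m\<in>K. \<phi> k x * \<phi> m x) \<partial>lborel)"
    by (simp add: gram_def integrable_phi_mult)
  also have "\<dots> = (\<integral>x. \<phi> k x \<partial>lborel)"
  proof (intro Bochner_Integration.integral_cong refl)
    fix x
    have "\<phi> k x * (\<Sum>m\<in>K. \<phi> m x) = \<phi> k x"
    proof (cases "\<phi> k x = 0")
      case False
      then have "{m. \<phi> m x \<noteq> 0} \<subseteq> K" using K[of x] by auto
      then show ?thesis using phi_sum[of K x] by (simp add: K_def)
    qed simp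
    then show "(\<Sum>m\<in>K. \<phi> k x * \<phi> m x) = \<phi> k x"
      by (simp add: sum_distrib_left)
  qed
  finally show ?thesis .
qed

lemma gram_normalised:
  "(\<integral>x. (\<phi> k x / sqrt (\<integral>y. \<phi> k y \<partial>lborel)) * (\<phi> m x / sqrt (\<integral>y. \<phi> m y \<partial>lborel)) \<partial>lborel)
    = gram \<phi> k m / (sqrt (\<Sum>\<^sub>\<infinity> j. gram \<phi> k j) * sqrt (\<Sum>\<^sub>\<infinity> j. gram \<phi> m j))"
proof -
  have "(\<lambda>x. (\<phi> k x / sqrt (\<integral>y. \<phi> k y \<partial>lborel)) * (\<phi> m x / sqrt (\<integral>y. \<phi> m y \<partial>lborel)))
      = (\<lambda>x. \<phi> k x * \<phi> m x / (sqrt (\<Sum>\<^sub>\<infinity> j. gram \<phi> k j) * sqrt (\<Sum>\<^sub>\<infinity> j. gram \<phi> m j)))"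
    by (simp add: gram_row_sum)
  then show ?thesis
    by (simp only: gram_def[of _ k m] integral_divide_zero)
qed

end

theorem theorem3:
  fixes n :: nat and hl hr :: real and \<phi> :: "int \<Rightarrow> real \<Rightarrow> real"
  assumes "n \<ge> 1" and "hl > 0" and "hr > 0"
    and "is_basic_limit_family n hl hr \<phi>"
  shows "gram \<phi> = half_PtHP n hl hr (gram \<phi>)
    \<and> (\<forall>H. H = half_PtHP n hl hr H
           \<and> (\<forall>k m. k \<notin> I_irr n \<and> m \<notin> I_irr n \<longrightarrow> H k m = gram \<phi> k m)
           \<and> (\<forall>k m. (\<forall>x. \<phi> k x * \<phi> m x = 0) \<longrightarrow> H k m = 0)
           \<longrightarrow> H = gram \<phi>)
    \<and> ((\<forall>k. (\<integral>x. \<phi> k x \<partial>lborel) > 0) \<longrightarrow>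
        (\<forall>k m. (\<integral>x. (\<phi> k x / sqrt (\<integral>y. \<phi> k y \<partial>lborel))
                      * (\<phi> m x / sqrt (\<integral>y. \<phi> m y \<partial>lborel)) \<partial>lborel)
              = gram \<phi> k m / (sqrt (\<Sum>\<^sub>\<infinity> j. gram \<phi> k j) * sqrt (\<Sum>\<^sub>\<infinity> j. gram \<phi> m j))))"
proof -
  interpret dd_basic_limits n hl hr \<phi>
    using assms by unfold_locales
  show ?thesis
    using gram_refinement gram_unique gram_normalised by blast
qed

end
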